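(* Assume the standing hypotheses (H), and let $d=\sup\{\sqrt{x_1^2+x_2^2}:\ \mathbf{x}\in\operatorname{Supp}\rho\}$. Then $\lambda\le-\frac12\Omega^2d^2$.
   Context: Standing hypotheses (H): $K\subset\mathbb{R}^3$ is a bounded axisymmetric domain (invariant under rotations about the $x_3$-axis) satisfying the no-trapping condition (whenever $(x,y,z)\notin K$, the half line $(x,y,z)+t(x,y,0)$, $t\ge0$, lies in $\mathbb{R}^3\setminus K$). $f:[0,\infty)\to[0,\infty)$ satisfies (F1) non-negative, continuous, strictly increasing for $s>0$; (F2) $\lim_{s\to0}f(s)s^{-4/3}=0$, $\lim_{s\to\infty}f(s)s^{-4/3}=\infty$; (F3) $\liminf_{s\to\infty}f(s)s^{-\gamma}>0$ for some $\gamma>4/3$; (F4) $f\in C^1(0,\infty)$ and $\liminf_{s\to0}f'(s)s^{-\mu}>0$ for some $\mu>0$. $A(s)=s\int_0^s\frac{f(t)}{t^2}dt$. For $q>3$, $\rho_K\in L^q(K)$ is non-negative and axisymmetric and $\Phi_K(\mathbf{x})=\int_K\frac{\rho_K(\mathbf{y})}{|\mathbf{x}-\mathbf{y}|}d\mathbf{y}$. $M>0$; $\Omega\ge1$ is a constant. For $\rho$ on $\mathbb{R}^3\setminus K$, $B\rho(\mathbf{x})=\int_{\mathbb{R}^3\setminus K}\frac{\rho(\mathbf{y})}{|\mathbf{x}-\mathbf{y}|}d\mathbf{y}$. $\rho:\mathbb{R}^3\setminus K\to[0,\infty)$ is bounded and continuous with $\int\rho=M$, and there is a constant $\lambda$ such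 that $A'(\rho)-B\rho-\frac12\Omega^2r^2-\Phi_K=\lambda$ on $\{\rho>0\}$, where $r=\sqrt{x_1^2+x_2^2}$. *)

theory Defs
  imports "HOL-Analysis.Analysis"
begin

definition cyl_r :: "real^3 \<Rightarrow> real" where
  "cyl_r x = sqrt ((x$1)^2 + (x$2)^2)"

definition rot3 :: "real \<Rightarrow> real^3 \<Rightarrow> real^3" where
  "rot3 \<theta> x = vector [cos \<theta> * x$1 - sin \<theta> * x$2, sin \<theta> * x$1 + cos \<theta> * x$2, x$3]"

definition axisym_set :: "(real^3) set \<Rightarrow> bool" where
  "axisym_set K \<longleftrightarrow> (\<forall>\<theta> x. rot3 \<theta> x \<in> K \<longleftrightarrow> x \<in> K)"

definition axisym_fun_on :: "(real^3) set \<Rightarrow> (real^3 \<Rightarrow> real) \<Rightarrow> bool" where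
  "axisym_fun_on S g \<longleftrightarrow> (\<forall>\<theta>. \<forall>x\<in>S. g (rot3 \<theta> x) = g x)"

definition bounded_domain :: "(real^3) set \<Rightarrow> bool" where
  "bounded_domain K \<longleftrightarrow> K \<noteq> {} \<and> open K \<and> connected K \<and> bounded K"

definition no_trapping :: "(real^3) set \<Rightarrow> bool" where
  "no_trapping K \<longleftrightarrow>
     (\<forall>x. x \<notin> K \<longrightarrow> (\<forall>t\<ge>0. x + t *\<^sub>R vector [x$1, x$2, 0] \<notin> K))"

definition F1 :: "(real \<Rightarrow> real) \<Rightarrow> bool" where
  "F1 f \<longleftrightarrow> (\<forall>s\<ge>0. f s \<ge> 0) \<and> continuous_on {0..} f \<and> strict_mono_on {0<..} f"

definition F2 :: "(real \<Rightarrow> real) \<Rightarrow> bool" where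
  "F2 f \<longleftrightarrow> ((\<lambda>s. f s / s powr (4/3)) \<longlongrightarrow> 0) (at_right 0)
            \<and> filterlim (\<lambda>s. f s / s powr (4/3)) at_top at_top"

definition F3 :: "(real \<Rightarrow> real) \<Rightarrow> bool" where
  "F3 f \<longleftrightarrow> (\<exists>\<gamma>>4/3. Liminf at_top (\<lambda>s. ereal (f s / s powr \<gamma>)) > 0)"

definition F4 :: "(real \<Rightarrow> real) \<Rightarrow> bool" where
  "F4 f \<longleftrightarrow> f differentiable_on {0<..} \<and> continuous_on {0<..} (deriv f)
            \<and> (\<exists>\<mu>>0. Liminf (at_right 0) (\<lambda>s. ereal (deriv f s / s powr \<mu>)) > 0)"

definition A_fun :: "(real \<Rightarrow> real) \<Rightarrow> real \<Rightarrow> real" where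
  "A_fun f s = s * (LBINT t=0..s. f t / t^2)"

definition newton_pot :: "(real^3) set \<Rightarrow> (real^3 \<Rightarrow> real) \<Rightarrow> real^3 \<Rightarrow> real" where
  "newton_pot S g x = (LINT y|lebesgue_on S. g y / dist x y)"

definition in_Lq :: "real \<Rightarrow> (real^3) set \<Rightarrow> (real^3 \<Rightarrow> real) \<Rightarrow> bool" where
  "in_Lq q S g \<longleftrightarrow> g \<in> borel_measurable (lebesgue_on S)
                     \<and> integrable (lebesgue_on S) (\<lambda>x. \<bar>g x\<bar> powr q)"

end

theory Submission
  imports Defs "HOL-Real_Asymp.Real_Asymp"
begin

text \<open>
  Both Newtonian potentials are non-negative, so on the support of \<rho> the Euler--Lagrange
  equation gives \<open>\<lambda> \<le> A'(\<rho> x) - \<Omega>\<^sup>2 r(x)\<^sup>2 / 2\<close>. By (F1), (F2) the derivative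
  \<open>A'(s) = \<integral>\<^sub>0\<^sup>s f(t)/t\<^sup>2 dt + f(s)/s\<close> tends to 0 as \<open>s \<rightarrow> 0\<close> and is bounded on bounded sets.
  Suppose \<open>\<lambda> > -\<Omega>\<^sup>2 r(x)\<^sup>2 / 2\<close> at a support point x off the axis and follow the outward
  horizontal ray from x, which stays outside K by the no-trapping condition. Along the ray the
  centrifugal term only grows, so wherever \<rho> > 0 the small values of A' are excluded and \<rho> stays
  bounded away from 0; by continuity \<rho> never vanishes on the ray, and then the bound on A'
  contradicts the quadratic growth of \<open>r\<^sup>2\<close>. The inequality extends to the closure of the support
  (on the axis it reads \<open>\<lambda> \<le> 0\<close>, which follows from the positive mass lying off the null set
  \<open>x\<^sub>1 = 0\<close>), and taking the supremum of r gives the claim.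
\<close>

lemma F2_imp_div_tendsto_0:
  assumes "F2 f"
  shows "((\<lambda>s. f s / s) \<longlongrightarrow> 0) (at_right 0)"
proof -
  have "((\<lambda>s. f s / s powr (4/3) * s powr (1/3)) \<longlongrightarrow> 0 * 0) (at_right 0)"
    using assms unfolding F2_def by (intro tendsto_mult) (auto, real_asymp)
  moreover have "\<forall>\<^sub>F s in at_right 0. f s / s powr (4/3) * s powr (1/3) = f s / s"
    using eventually_at_right_less[of "0::real"]
  proof eventually_elim
    case (elim s)
    then have "s powr (4/3) = s * s powr (1/3)" using powr_add[of s 1 "1/3"] by simp
    then show ?case using elim by simp
  qed
  ultimately show ?thesis by (simp add: tendsto_cong)
qed

lemma set_integrable_powr_near_0:
  assumes "a > -1" "0 \<le> c"
  shows "set_integrable lborel {0<..<c} (\<lambda>t::real. t powr a)"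
proof -
  have "(\<lambda>t. t powr a) absolutely_integrable_on {0<..c}"
    using integrable_on_powr_from_0'[OF assms] by (subst absolutely_integrable_on_iff_nonneg) auto
  then have "set_integrable lborel {0<..c} (\<lambda>t::real. t powr a)"
    unfolding set_integrable_def by (subst (asm) integrable_completion) auto
  then show ?thesis by (rule set_integrable_subset) auto
qed

lemma F1_continuous_on_div_square:
  assumes "F1 f"
  shows "continuous_on {0<..} (\<lambda>t. f t / t^2)"
proof -
  have "continuous_on {0<..} f"
    using assms by (auto simp: F1_def intro: continuous_on_subset)
  then show ?thesis by (intro continuous_intros) auto
qed

text \<open>By (F2), \<open>f t / t\<^sup>2 \<le> t powr (-2/3)\<close> near 0.\<close>

lemma set_integrable_div_square:
  assumes f1: "F1 f" and f2: "F2 f" and c: "0 < c"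
  shows "set_integrable lborel {0<..<c} (\<lambda>t. f t / t^2)"
proof -
  have "\<forall>\<^sub>F s in at_right 0. f s / s powr (4/3) < 1"
    using f2 unfolding F2_def by (intro order_tendstoD) auto
  then obtain \<delta> where \<delta>: "0 < \<delta>" "\<And>s. 0 < s \<Longrightarrow> s < \<delta> \<Longrightarrow> f s / s powr (4/3) < 1"
    unfolding eventually_at_right_field by auto
  define e where "e = min \<delta> c"
  have e: "0 < e" "e \<le> c" using \<delta> c by (auto simp: e_def)
  have near0: "set_integrable lborel {0<..<e} (\<lambda>t. f t / t^2)"
  proof (rule set_integrable_bound[OF set_integrable_powr_near_0[of "-2/3" e]])
    show "set_borel_measurable lborel {0<..<e} (\<lambda>t. f t / t^2)"
      unfolding set_borel_measurable_def measurable_lborel2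
      by (intro borel_measurable_continuous_on_indicator
          continuous_on_subset[OF F1_continuous_on_div_square[OF f1]]) auto
    show "AE t in lborel. t \<in> {0<..<e} \<longrightarrow> norm (f t / t^2) \<le> norm (t powr (-2/3))"
    proof (intro AE_I2 impI)
      fix t :: real assume t: "t \<in> {0<..<e}"
      then have t0: "0 < t" and "t < \<delta>" by (auto simp: e_def)
      then have "f t < t powr (4/3)" using \<delta>(2)[of t] by (simp add: divide_less_eq)
      then have "f t / t powr 2 \<le> t powr (4/3) / t powr 2"
        using t0 by (intro divide_right_mono) auto
      also have "\<dots> = t powr (-2/3)" by (simp add: powr_diff[symmetric])
      finally have "f t / t^2 \<le> t powr (-2/3)" using t0 by simp
      moreover have "0 \<le> f t / t^2" using f1 t0 by (simp add: F1_def)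
      ultimately show "norm (f t / t^2) \<le> norm (t powr (-2/3))" by simp
    qed
  qed (use e in auto)
  have "set_integrable lborel ({0<..<e} \<union> {e..c}) (\<lambda>t. f t / t^2)"
    using e by (intro set_integrable_Un near0 borel_integrable_atLeastAtMost'
        continuous_on_subset[OF F1_continuous_on_div_square[OF f1]]) auto
  then show ?thesis by (rule set_integrable_subset) auto
qed

lemma has_real_derivative_interval_integral_from_0:
  fixes g :: "real \<Rightarrow> real"
  assumes int: "\<And>c. 0 < c \<Longrightarrow> set_integrable lborel {0<..<c} g"
    and cont: "continuous_on {0<..} g" and s: "0 < s"
  shows "((\<lambda>u. LBINT t=0..u. g t) has_real_derivative g s) (at s)"
proof -
  define c where "c = s / 2"
  have c: "0 < c" "c < s" using s by (auto simp: c_def)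
  have split: "(LBINT t=0..u. g t) = (LBINT t=0..c. g t) + (LBINT t=c..u. g t)" if "0 < u" for u :: real
  proof -
    have "interval_lebesgue_integrable lborel (min 0 (min (ereal c) (ereal u)))
            (max 0 (max (ereal c) (ereal u))) g"
      using int[of "max c u"] c that
      by (cases "c \<le> u") (simp_all add: interval_lebesgue_integrable_def zero_ereal_def max_def min_def)
    from interval_integral_sum[OF this] show ?thesis by simp
  qed
  have "((\<lambda>u. LBINT t=c..u. g t) has_vector_derivative g s) (at s within {c..2 * s})"
    using c s by (intro interval_integral_FTC2 continuous_on_subset[OF cont]) auto
  then have "((\<lambda>u. LBINT t=c..u. g t) has_vector_derivative g s) (at s within {c<..<2 * s})"
    by (rule has_vector_derivative_within_subset) auto
  then have "((\<lambda>u. LBINT t=c..u. g t) has_real_derivative g s) (at s)"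
    using c s
    by (simp add: has_real_derivative_iff_has_vector_derivative at_within_open[of s "{c<..<2 * s}"])
  from DERIV_add[OF DERIV_const this]
  have "((\<lambda>u. (LBINT t=0..c. g t) + (LBINT t=c..u. g t)) has_real_derivative g s) (at s)"
    by simp
  then show ?thesis
    by (rule has_field_derivative_transform_within_open[where S = "{0<..}"]) (use s split in auto)
qed

lemma tendsto_interval_integral_from_0:
  fixes g :: "real \<Rightarrow> real"
  assumes c: "0 < c" and int: "set_integrable lborel {0<..<c} g"
  shows "((\<lambda>u::real. LBINT t=0..u. g t) \<longlongrightarrow> 0) (at_right 0)"
proof -
  define b where "b = c / 2"
  have b: "0 < b" "b < c" using c by (auto simp: b_def)
  have int_b: "set_integrable lborel {0<..b} g" by (rule set_integrable_subset[OF int]) (use b in auto)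
  have int_b': "set_integrable lborel {0<..<b} g" by (rule set_integrable_subset[OF int]) (use b in auto)
  have tail: "((\<lambda>u. LBINT t:{u..b}. g t) \<longlongrightarrow> (LBINT t:{0<..b}. g t)) (at_right 0)"
    by (intro tendsto_set_lebesgue_integral_at_right int_b b) auto
  have lim: "((\<lambda>u. (LBINT t:{0<..b}. g t) - (LBINT t:{u..b}. g t)) \<longlongrightarrow> 0) (at_right 0)"
    using tendsto_diff[OF tendsto_const tail, of "LBINT t:{0<..b}. g t"] by simp
  have eq: "\<forall>\<^sub>F u in at_right 0. (LBINT t:{0<..b}. g t) - (LBINT t:{u..b}. g t) = (LBINT t=0..u. g t)"
    using eventually_at_right_real[OF b(1)]
  proof eventually_elim
    case (elim u)
    have "interval_lebesgue_integrable lborel (min 0 (min (ereal u) (ereal b)))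
            (max 0 (max (ereal u) (ereal b))) g"
      using int_b' elim
      by (simp add: interval_lebesgue_integrable_def zero_ereal_def max_def min_def)
    then have "(LBINT t=0..u. g t) + (LBINT t=u..b. g t) = (LBINT t=0..b. g t)"
      by (rule interval_integral_sum)
    moreover have "(LBINT t=0..b. g t) = (LBINT t:{0<..b}. g t)"
      using interval_integral_Ioc[of 0 b g] b by (simp add: zero_ereal_def)
    moreover have "(LBINT t=u..b. g t) = (LBINT t:{u..b}. g t)"
      using elim by (intro interval_integral_Icc) simp
    ultimately show ?case by linarith
  qed
  from Lim_transform_eventually[OF lim eq] show ?thesis .
qed

lemma A_fun_has_real_derivative:
  assumes f1: "F1 f" and f2: "F2 f" and s: "0 < s"
  shows "(A_fun f has_real_derivative (LBINT t=0..s. f t / t^2) + f s / s) (at s)"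
proof -
  have "((\<lambda>u. LBINT t=0..u. f t / t^2) has_real_derivative f s / s^2) (at s)"
    by (intro has_real_derivative_interval_integral_from_0 set_integrable_div_square
        F1_continuous_on_div_square f1 f2 s)
  from DERIV_mult[OF DERIV_ident this] show ?thesis
    using s by (simp add: A_fun_def[abs_def] power2_eq_square)
qed

lemma deriv_A_fun:
  assumes "F1 f" "F2 f" "0 < s"
  shows "deriv (A_fun f) s = (LBINT t=0..s. f t / t^2) + f s / s"
  by (rule DERIV_imp_deriv[OF A_fun_has_real_derivative[OF assms]])

lemma deriv_A_fun_tendsto_0:
  assumes f1: "F1 f" and f2: "F2 f"
  shows "(deriv (A_fun f) \<longlongrightarrow> 0) (at_right 0)"
proof -
  have "((\<lambda>s::real. (LBINT t=0..s. f t / t^2) + f s / s) \<longlongrightarrow> 0 + 0) (at_right 0)"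
    by (intro tendsto_add tendsto_interval_integral_from_0[of 1] set_integrable_div_square
        F2_imp_div_tendsto_0 f1 f2) auto
  moreover have "\<forall>\<^sub>F s in at_right 0. (LBINT t=0..s. f t / t^2) + f s / s = deriv (A_fun f) s"
    using eventually_at_right_less[of "0::real"] by eventually_elim (simp add: deriv_A_fun f1 f2)
  ultimately show ?thesis by (simp add: Lim_transform_eventually)
qed

lemma deriv_A_fun_bounded_above:
  assumes f1: "F1 f" and f2: "F2 f"
  shows "\<exists>H. \<forall>s\<in>{0<..C}. deriv (A_fun f) s \<le> H"
proof -
  obtain \<delta> where \<delta>: "0 < \<delta>" "\<And>s. 0 < s \<Longrightarrow> s < \<delta> \<Longrightarrow> f s / s < 1"
    using order_tendstoD(2)[OF F2_imp_div_tendsto_0[OF f2], of 1]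
    unfolding eventually_at_right_field by auto
  have "deriv (A_fun f) s \<le> (LBINT t=0..C. f t / t^2) + max 1 (f C / \<delta>)"
    if s: "s \<in> {0<..C}" for s
  proof -
    have "(LBINT t=0..s. f t / t^2) \<le> (LBINT t=0..C. f t / t^2)"
    proof (rule DERIV_nonneg_imp_nondecreasing[of s C "\<lambda>u. LBINT t=0..u. f t / t^2"])
      fix x assume "s \<le> x"
      with s have "0 < x" by simp
      then have "((\<lambda>u. LBINT t=0..u. f t / t^2) has_real_derivative f x / x^2) (at x)"
        by (intro has_real_derivative_interval_integral_from_0 set_integrable_div_square
            F1_continuous_on_div_square f1 f2)
      moreover have "0 \<le> f x / x^2" using f1 \<open>0 < x\<close> by (simp add: F1_def)
      ultimately show "\<exists>y. ((\<lambda>u. LBINT t=0..u. f t / t^2) has_real_derivative y) (at x) \<and> 0 \<le> y"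
        by blast
    qed (use s in simp)
    moreover have "f s / s \<le> max 1 (f C / \<delta>)"
    proof (cases "s < \<delta>")
      case True
      then have "f s / s < 1" using \<delta>(2)[of s] s by simp
      then show ?thesis by (intro max.coboundedI1 less_imp_le)
    next
      case False
      have "f s \<le> f C"
      proof (cases "s = C")
        case False
        with s have "s < C" by simp
        then have "f s < f C"
          using s f1 unfolding F1_def by (intro strict_mono_onD[of "{0<..}" f]) auto
        then show ?thesis by simp
      qed simp
      then have "f s / s \<le> f C / s" using s by (simp add: divide_right_mono)
      also have "\<dots> \<le> f C / \<delta>"
        using False \<delta>(1) s f1 by (intro divide_left_mono) (auto simp: F1_def)
      finally show ?thesis by simp
    qed
    ultimately show ?thesis using deriv_A_fun[OF f1 f2] s by simp
  qed
  then show ?thesis by blast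
qed

lemma le_minus_of_bound_along_ray:
  fixes h \<phi> :: "real \<Rightarrow> real"
  assumes h0: "(h \<longlongrightarrow> 0) (at_right 0)" and h_bdd: "\<forall>s\<in>{0<..C}. h s \<le> H"
    and \<phi>_cont: "continuous_on {0..} \<phi>" and \<phi>_le: "\<And>t. 0 \<le> t \<Longrightarrow> \<phi> t \<le> C"
    and \<phi>0: "0 < \<phi> 0" and q: "0 < q"
    and bound: "\<And>t. 0 \<le> t \<Longrightarrow> 0 < \<phi> t \<Longrightarrow> lam \<le> h (\<phi> t) - q * (1 + t)^2"
  shows "lam \<le> - q"
proof (rule ccontr)
  \<comment> \<open>Small values of \<open>h\<close> violate the bound, so \<open>\<phi>\<close> cannot drop below \<open>\<delta>\<close>;
    by continuity it then never vanishes.\<close>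
  assume "\<not> lam \<le> - q"
  then obtain \<delta> where \<delta>: "0 < \<delta>" "\<And>s. 0 < s \<Longrightarrow> s < \<delta> \<Longrightarrow> h s < lam + q"
    using order_tendstoD(2)[OF h0, of "lam + q"] unfolding eventually_at_right_field by auto
  have away: "\<delta> \<le> \<phi> t" if t: "0 \<le> t" "0 < \<phi> t" for t
  proof (rule ccontr)
    assume "\<not> \<delta> \<le> \<phi> t"
    then have "h (\<phi> t) < lam + q" using \<delta>(2) t by simp
    moreover have "1 \<le> (1 + t)^2" using t by simp
    then have "q \<le> q * (1 + t)^2" using q by simp
    ultimately show False using bound[OF t] by linarith
  qed
  have pos: "0 < \<phi> t" if t: "0 \<le> t" for t
  proof (rule ccontr)
    assume "\<not> 0 < \<phi> t"
    moreover have "\<delta> \<le> \<phi> 0" using away[of 0] \<phi>0 by simp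
    moreover have "continuous_on {0..t} \<phi>" by (rule continuous_on_subset[OF \<phi>_cont]) auto
    ultimately obtain s where "0 \<le> s" "\<phi> s = \<delta> / 2"
      using IVT2'[of \<phi> t "\<delta> / 2" 0] t \<delta>(1) by auto
    then show False using away[of s] \<delta>(1) by simp
  qed
  define t where "t = max 0 ((H - lam) / q)"
  have t: "0 \<le> t" by (simp add: t_def)
  have "h (\<phi> t) \<le> H" using h_bdd pos[OF t] \<phi>_le[OF t] by simp
  then have "lam \<le> H - q * (1 + t)^2" using bound[OF t pos[OF t]] by linarith
  moreover have "(H - lam) / q \<le> t" by (simp add: t_def)
  then have "H - lam \<le> q * t" using q by (simp add: divide_le_eq mult.commute)
  moreover have "(1 + t)^2 = 1 + 2 * t + t * t" by (simp add: power2_eq_square algebra_simps)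
  then have "t < (1 + t)^2" using mult_nonneg_nonneg[OF t t] t by linarith
  then have "q * t < q * (1 + t)^2" using q by simp
  ultimately show False by linarith
qed

lemma cyl_r_nonneg: "0 \<le> cyl_r x"
  by (simp add: cyl_r_def)

lemma cyl_r_pos: "x$1 \<noteq> 0 \<Longrightarrow> 0 < cyl_r x"
  by (simp add: cyl_r_def add_pos_nonneg)

lemma cyl_r_along_ray:
  assumes "0 \<le> t"
  shows "cyl_r (x + t *\<^sub>R vector [x$1, x$2, 0]) = (1 + t) * cyl_r x"
proof -
  have "cyl_r (x + t *\<^sub>R vector [x$1, x$2, 0]) = sqrt ((1 + t)^2 * ((x$1)^2 + (x$2)^2))"
    unfolding cyl_r_def by (simp add: algebra_simps power2_eq_square)
  also have "\<dots> = (1 + t) * cyl_r x" using assms by (simp add: real_sqrt_mult cyl_r_def)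
  finally show ?thesis .
qed

lemma continuous_on_cyl_r: "continuous_on S cyl_r"
  unfolding cyl_r_def[abs_def] by (intro continuous_intros)

lemma no_trapping_support_bound:
  fixes \<rho> :: "real^3 \<Rightarrow> real" and h :: "real \<Rightarrow> real"
  assumes K_nt: "no_trapping K" and \<rho>_cont: "continuous_on (- K) \<rho>"
    and \<rho>_bdd: "bounded (\<rho> ` (- K))"
    and h0: "(h \<longlongrightarrow> 0) (at_right 0)" and h_bdd: "\<And>C. \<exists>H. \<forall>s\<in>{0<..C}. h s \<le> H"
    and a: "0 < a"
    and bound: "\<And>x. x \<notin> K \<Longrightarrow> 0 < \<rho> x \<Longrightarrow> lam \<le> h (\<rho> x) - a * (cyl_r x)^2"
    and x: "x \<notin> K" "0 < \<rho> x" "0 < cyl_r x"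
  shows "lam \<le> - a * (cyl_r x)^2"
proof -
  define y where "y t = x + t *\<^sub>R vector [x$1, x$2, 0]" for t :: real
  have yK: "y t \<notin> K" if "0 \<le> t" for t
    using K_nt x(1) that unfolding no_trapping_def y_def by blast
  obtain C where "\<forall>v\<in>\<rho> ` (- K). \<bar>v\<bar> \<le> C" using \<rho>_bdd unfolding bounded_real by blast
  then have C: "\<And>z. z \<notin> K \<Longrightarrow> \<rho> z \<le> C" by (metis ComplI abs_le_D1 image_eqI)
  obtain H where H: "\<forall>s\<in>{0<..C}. h s \<le> H" using h_bdd by blast
  have "lam \<le> - (a * (cyl_r x)^2)"
  proof (rule le_minus_of_bound_along_ray[OF h0 H])
    have "continuous_on {0..} y" unfolding y_def by (intro continuous_intros)
    then show "continuous_on {0..} (\<rho> \<circ> y)"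
      by (rule continuous_on_compose[OF _ continuous_on_subset[OF \<rho>_cont]]) (use yK in auto)
    show "(\<rho> \<circ> y) t \<le> C" if "0 \<le> t" for t using C yK that by simp
    show "lam \<le> h ((\<rho> \<circ> y) t) - a * (cyl_r x)^2 * (1 + t)^2"
      if "0 \<le> t" "0 < (\<rho> \<circ> y) t" for t
    proof -
      have "lam \<le> h (\<rho> (y t)) - a * (cyl_r (y t))^2"
        using bound[OF yK[OF that(1)]] that(2) by simp
      then show ?thesis
        using cyl_r_along_ray[OF that(1), of x] by (simp add: y_def power_mult_distrib mult_ac)
    qed
  qed (use x a y_def in auto)
  then show ?thesis by simp
qed

lemma exists_off_axis_nonzero:
  fixes g :: "real^3 \<Rightarrow> real"
  assumes S: "S \<in> sets lebesgue" and nonzero: "(LINT x|lebesgue_on S. g x) \<noteq> 0"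
  shows "\<exists>x\<in>S. g x \<noteq> 0 \<and> 0 < cyl_r x"
proof (rule ccontr)
  assume none: "\<not> ?thesis"
  have "{x::real^3. x$1 = 0} \<in> null_sets lebesgue"
    using negligible_standard_hyperplane_cart[of 1] negligible_iff_null_sets by blast
  from AE_not_in[OF this] have "AE x::real^3 in lebesgue. x$1 \<noteq> 0" by simp
  moreover have "S \<inter> space lebesgue \<in> sets lebesgue" using S by simp
  ultimately have "AE x in lebesgue_on S. g x = 0"
    unfolding AE_restrict_space_iff[OF \<open>S \<inter> space lebesgue \<in> sets lebesgue\<close>]
    by eventually_elim (use none cyl_r_pos in blast)
  with nonzero show False by (simp add: integral_eq_zero_AE)
qed

lemma ereal_le_minus_SUP_square:
  fixes g :: "'a \<Rightarrow> real"
  assumes T: "T \<noteq> {}" and a: "0 < a" and g: "\<And>x. x \<in> T \<Longrightarrow> 0 \<le> g x"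
    and bound: "\<And>x. x \<in> T \<Longrightarrow> lam \<le> - a * (g x)^2"
  shows "ereal lam \<le> - ereal a * (SUP x\<in>T. ereal (g x))^2"
proof -
  obtain x0 where x0: "x0 \<in> T" using T by blast
  have "0 \<le> a * (g x0)^2" using a by simp
  then have lam: "lam \<le> 0" using bound[OF x0] by linarith
  define R where "R = sqrt (- lam / a)"
  have "g x \<le> R" if "x \<in> T" for x
    using bound[OF that] g[OF that] a unfolding R_def by (simp add: real_le_rsqrt field_simps)
  then have le: "(SUP x\<in>T. ereal (g x)) \<le> ereal R" by (intro SUP_least) simp
  have ge: "ereal 0 \<le> (SUP x\<in>T. ereal (g x))"
    using g[OF x0] SUP_upper[OF x0, of "\<lambda>x. ereal (g x)"] by (metis ereal_less_eq(3) order_trans)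
  obtain d where d: "(SUP x\<in>T. ereal (g x)) = ereal d"
    using le ge by (cases "SUP x\<in>T. ereal (g x)") auto
  with le ge have "d^2 \<le> R^2" by (simp add: power_mono)
  also have "R^2 = - lam / a" unfolding R_def using lam a by (simp add: divide_nonpos_pos)
  finally have "lam \<le> - a * d^2" using a by (simp add: field_simps)
  then show ?thesis by (simp add: d power2_eq_square)
qed

lemma newton_pot_nonneg:
  assumes "\<forall>y\<in>S. 0 \<le> g y"
  shows "0 \<le> newton_pot S g x"
  unfolding newton_pot_def
  using assms by (intro Bochner_Integration.integral_nonneg_AE AE_I2) (auto simp: space_restrict_space)

theorem mainTheorem12:
  fixes K :: "(real^3) set" and f :: "real \<Rightarrow> real"
    and q M \<Omega> lam :: real and \<rho>K \<rho> :: "real^3 \<Rightarrow> real"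
  assumes K_dom: "bounded_domain K" and K_axi: "axisym_set K" and K_nt: "no_trapping K"
    and f1: "F1 f" and f2: "F2 f" and f3: "F3 f" and f4: "F4 f"
    and q: "q > 3" and rhoK_Lq: "in_Lq q K \<rho>K"
    and rhoK_nonneg: "\<forall>x\<in>K. \<rho>K x \<ge> 0" and rhoK_axi: "axisym_fun_on K \<rho>K"
    and M: "M > 0" and Omega: "\<Omega> \<ge> 1"
    and rho_nonneg: "\<forall>x. x \<notin> K \<longrightarrow> \<rho> x \<ge> 0"
    and rho_bdd: "bounded (\<rho> ` (- K))"
    and rho_cont: "continuous_on (- K) \<rho>"
    and rho_int: "integrable (lebesgue_on (- K)) \<rho>"
    and rho_mass: "(LINT x|lebesgue_on (- K). \<rho> x) = M"
    and EL: "\<forall>x. x \<notin> K \<and> \<rho> x > 0 \<longrightarrow>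
               deriv (A_fun f) (\<rho> x) - newton_pot (- K) \<rho> x
                 - 1/2 * \<Omega>^2 * (cyl_r x)^2 - newton_pot K \<rho>K x = lam"
  shows "ereal lam \<le>
           - ereal (1/2 * \<Omega>^2) *
             (SUP x\<in>closure {y. y \<notin> K \<and> \<rho> y > 0}. ereal (cyl_r x))^2"
proof -
  define a where "a = 1/2 * \<Omega>^2"
  define S where "S = {y. y \<notin> K \<and> \<rho> y > 0}"
  have a: "0 < a" using Omega by (simp add: a_def)
  have bound: "lam \<le> deriv (A_fun f) (\<rho> x) - a * (cyl_r x)^2" if "x \<notin> K" "0 < \<rho> x" for x
    using EL that newton_pot_nonneg[of "- K" \<rho> x] newton_pot_nonneg[of K \<rho>K x]
      rho_nonneg rhoK_nonneg
    unfolding a_def by force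
  have off_axis: "lam \<le> - a * (cyl_r x)^2" if "x \<notin> K" "0 < \<rho> x" "0 < cyl_r x" for x
    using no_trapping_support_bound[OF K_nt rho_cont rho_bdd deriv_A_fun_tendsto_0[OF f1 f2]
        deriv_A_fun_bounded_above[OF f1 f2] a bound that] .
  have "- K \<in> sets lebesgue" using K_dom by (simp add: bounded_domain_def)
  then obtain x0 where x0: "x0 \<in> S" "0 < cyl_r x0"
    using exists_off_axis_nonzero[of "- K" \<rho>] rho_mass M rho_nonneg by (force simp: S_def)
  have "0 < a * (cyl_r x0)^2" using a x0 by simp
  then have "lam \<le> 0" using off_axis[of x0] x0 by (simp add: S_def)
  then have "S \<subseteq> {x. lam \<le> - a * (cyl_r x)^2}"
    using off_axis cyl_r_nonneg by (fastforce simp: S_def le_less)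
  moreover have "closed {x. lam \<le> - a * (cyl_r x)^2}"
    by (intro closed_Collect_le continuous_intros continuous_on_cyl_r)
  ultimately have "\<forall>x\<in>closure S. lam \<le> - a * (cyl_r x)^2" using closure_minimal by blast
  then show ?thesis
    unfolding a_def[symmetric] S_def[symmetric]
    by (intro ereal_le_minus_SUP_square cyl_r_nonneg a) (use x0 closure_subset in auto)
qed

end
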